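(* Let $m \in \mathbb N$ and $X, Y, Z \in M_m$. Then $\cos\varphi\, X + \sin\varphi\, Y + Z \in \mathcal U_m$ for all $\varphi \in \mathbb R$ if and only if $$|X|^2 = |Y|^2 = I_m - |Z|^2 \quad\text{and}\quad \operatorname{Re}(X^\ast Y) = \operatorname{Re}(X^\ast Z) = \operatorname{Re}(Y^\ast Z) = 0_m.$$
   Context: $M_m$ is the set of $m\times m$ complex matrices and $\mathcal U_m$ the unitary ones. For $A \in M_m$, $\operatorname{Re}A = \tfrac12(A + A^\ast)$ and $|A| = (A^\ast A)^{1/2}$, so $|A|^2 = A^\ast A$. *)

theory Defs
  imports "Jordan_Normal_Form.Matrix"
begin

definition adj :: "complex mat \<Rightarrow> complex mat" where
  "adj A = mat (dim_col A) (dim_row A) (\<lambda>(i,j). cnj (A $$ (j,i)))"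

definition mat_Re :: "complex mat \<Rightarrow> complex mat" where
  "mat_Re A = (1/2 :: complex) \<cdot>\<^sub>m (A + adj A)"

definition unitary :: "nat \<Rightarrow> complex mat \<Rightarrow> bool" where
  "unitary m U \<longleftrightarrow> U \<in> carrier_mat m m \<and> adj U * U = 1\<^sub>m m \<and> U * adj U = 1\<^sub>m m"

end

theory Submission
  imports Defs "Jordan_Normal_Form.Determinant"
begin

text \<open>
  For real c = cos \<phi> and s = sin \<phi>, the matrix U = c X + s Y + Z satisfies
  U^* U = c^2 |X|^2 + s^2 |Y|^2 + |Z|^2 + 2cs Re(X^* Y) + 2c Re(X^* Z) + 2s Re(Y^* Z),
  a trigonometric polynomial in \<phi> with matrix coefficients. Sampling it at
  \<phi> = 0, \<pi>, \<plusminus>\<pi>/2 and \<pi>/4 shows that it is identically I exactly when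
  |X|^2 = |Y|^2 = I - |Z|^2 and the three real parts vanish. Since U is square, a one-sided
  inverse is two-sided, so unitarity of U is just U^* U = I.
\<close>

lemma dim_row_adj [simp]: "dim_row (adj A) = dim_col A"
  and dim_col_adj [simp]: "dim_col (adj A) = dim_row A"
  and index_adj [simp]: "i < dim_col A \<Longrightarrow> j < dim_row A \<Longrightarrow> adj A $$ (i,j) = cnj (A $$ (j,i))"
  by (simp_all add: adj_def)

lemma adj_carrier_mat: "A \<in> carrier_mat n m \<Longrightarrow> adj A \<in> carrier_mat m n"
  unfolding carrier_mat_def by simp

lemma index_adj_mult:
  assumes "dim_row A = dim_row B" "i < dim_col A" "j < dim_col B"
  shows "(adj A * B) $$ (i,j) = (\<Sum>k<dim_row A. cnj (A $$ (k,i)) * B $$ (k,j))"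
  using assms by (simp add: scalar_prod_def atLeast0LessThan)

lemma adj_adj_mult:
  assumes "dim_row A = dim_row B"
  shows "adj (adj A * B) = adj B * A"
proof (rule eq_matI)
  fix i j assume "i < dim_row (adj B * A)" "j < dim_col (adj B * A)"
  then show "adj (adj A * B) $$ (i,j) = (adj B * A) $$ (i,j)"
    using assms by (simp del: index_mult_mat(1) add: index_adj_mult mult.commute)
qed (use assms in simp_all)

lemma trig_quadratic_eq_const_iff:
  fixes a b c r p q d :: "'a :: real_vector"
  shows "(\<forall>\<phi>::real. (cos \<phi>)\<^sup>2 *\<^sub>R a + (sin \<phi>)\<^sup>2 *\<^sub>R b + c + (cos \<phi> * sin \<phi>) *\<^sub>R r
            + cos \<phi> *\<^sub>R p + sin \<phi> *\<^sub>R q = d)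
     \<longleftrightarrow> a = b \<and> b = d - c \<and> r = 0 \<and> p = 0 \<and> q = 0" (is "(\<forall>\<phi>. ?E \<phi>) \<longleftrightarrow> _")
proof
  assume E: "\<forall>\<phi>. ?E \<phi>"
  have at_0: "a + c + p = d" and at_pi: "a + c - p = d"
    using E[rule_format, of 0] E[rule_format, of pi] by simp_all
  have at_pi2: "b + c + q = d" and at_neg_pi2: "b + c - q = d"
    using E[rule_format, of "pi/2"] E[rule_format, of "-(pi/2)"] by simp_all
  have at_pi4: "(1/2) *\<^sub>R (a + b) + c + (1/2) *\<^sub>R r + (sqrt 2 / 2) *\<^sub>R (p + q) = d"
    using E[rule_format, of "pi/4"] by (simp add: cos_45 sin_45 power_divide scaleR_add_right add_ac)
  have "p + p = (a + c + p) - (a + c - p)" "q + q = (b + c + q) - (b + c - q)"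
    by (simp_all add: algebra_simps)
  then have p: "p = 0" and q: "q = 0"
    using at_0 at_pi at_pi2 at_neg_pi2 by (simp_all flip: scaleR_2)
  have a: "a = d - c" and b: "b = d - c"
    using at_0 at_pi2 p q by (simp_all add: algebra_simps)
  have "(1/2) *\<^sub>R (a + b) = a"
    unfolding b a by (simp flip: scaleR_2)
  then have "r = 0"
    using at_pi4 a p q by simp
  with a b p q show "a = b \<and> b = d - c \<and> r = 0 \<and> p = 0 \<and> q = 0" by simp
next
  assume "a = b \<and> b = d - c \<and> r = 0 \<and> p = 0 \<and> q = 0"
  then show "\<forall>\<phi>. ?E \<phi>"
    by (simp flip: scaleR_add_left)
qed

lemma index_adj_mult_self_lincomb:
  fixes a b :: real
  assumes carrier: "X \<in> carrier_mat n m" "Y \<in> carrier_mat n m" "Z \<in> carrier_mat n m"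
    and ij: "i < m" "j < m"
  defines "U \<equiv> of_real a \<cdot>\<^sub>m X + of_real b \<cdot>\<^sub>m Y + Z"
  shows "(adj U * U) $$ (i,j) =
      a\<^sup>2 *\<^sub>R (adj X * X) $$ (i,j) + b\<^sup>2 *\<^sub>R (adj Y * Y) $$ (i,j) + (adj Z * Z) $$ (i,j)
      + (a * b) *\<^sub>R ((adj X * Y) $$ (i,j) + (adj Y * X) $$ (i,j))
      + a *\<^sub>R ((adj X * Z) $$ (i,j) + (adj Z * X) $$ (i,j))
      + b *\<^sub>R ((adj Y * Z) $$ (i,j) + (adj Z * Y) $$ (i,j))"
  using carrier ij
  by (auto simp del: index_mult_mat(1) simp: U_def index_adj_mult scaleR_sum_right sum.distrib[symmetric]
      intro!: sum.cong) (simp add: algebra_simps scaleR_conv_of_real power2_eq_square)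

lemma mat_Re_adj_mult:
  "dim_row A = dim_row B \<Longrightarrow> mat_Re (adj A * B) = (1/2) \<cdot>\<^sub>m (adj A * B + adj B * A)"
  by (simp add: mat_Re_def adj_adj_mult)

lemma mat_Re_adj_mult_eq_0_iff:
  assumes "A \<in> carrier_mat n m" "B \<in> carrier_mat n m"
  shows "mat_Re (adj A * B) = 0\<^sub>m m m \<longleftrightarrow> (\<forall>i<m. \<forall>j<m. (adj A * B) $$ (i,j) + (adj B * A) $$ (i,j) = 0)"
  using assms by (simp del: index_mult_mat(1) add: mat_Re_adj_mult mat_eq_iff)

lemma unitary_iff_adj_mult_self:
  "U \<in> carrier_mat m m \<Longrightarrow> unitary m U \<longleftrightarrow> adj U * U = 1\<^sub>m m"
  unfolding unitary_def by (metis adj_carrier_mat mat_mult_left_right_inverse)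

theorem lemma3p1:
  fixes m :: nat and X Y Z :: "complex mat"
  assumes "X \<in> carrier_mat m m" "Y \<in> carrier_mat m m" "Z \<in> carrier_mat m m"
  shows "(\<forall>\<phi>::real. unitary m (complex_of_real (cos \<phi>) \<cdot>\<^sub>m X + complex_of_real (sin \<phi>) \<cdot>\<^sub>m Y + Z))
    \<longleftrightarrow> (adj X * X = adj Y * Y \<and> adj Y * Y = 1\<^sub>m m - adj Z * Z \<and>
         mat_Re (adj X * Y) = 0\<^sub>m m m \<and> mat_Re (adj X * Z) = 0\<^sub>m m m \<and> mat_Re (adj Y * Z) = 0\<^sub>m m m)"
proof -
  let ?U = "\<lambda>\<phi>::real. complex_of_real (cos \<phi>) \<cdot>\<^sub>m X + complex_of_real (sin \<phi>) \<cdot>\<^sub>m Y + Z"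
  let ?G = "\<lambda>A B i j. (adj A * B) $$ (i,j)"
  let ?I = "\<lambda>i j. if i = j then 1 else 0 :: complex"
  have entrywise:
    "adj X * X = adj Y * Y \<longleftrightarrow> (\<forall>i<m. \<forall>j<m. ?G X X i j = ?G Y Y i j)"
    "adj Y * Y = 1\<^sub>m m - adj Z * Z \<longleftrightarrow> (\<forall>i<m. \<forall>j<m. ?G Y Y i j = ?I i j - ?G Z Z i j)"
    using assms by (simp_all del: index_mult_mat(1) add: mat_eq_iff)
  have "(\<forall>\<phi>. unitary m (?U \<phi>)) \<longleftrightarrow> (\<forall>\<phi>. adj (?U \<phi>) * ?U \<phi> = 1\<^sub>m m)"
    using assms by (simp add: unitary_iff_adj_mult_self)
  also have "\<dots> \<longleftrightarrow> (\<forall>i<m. \<forall>j<m. \<forall>\<phi>.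
      (cos \<phi>)\<^sup>2 *\<^sub>R ?G X X i j + (sin \<phi>)\<^sup>2 *\<^sub>R ?G Y Y i j + ?G Z Z i j
      + (cos \<phi> * sin \<phi>) *\<^sub>R (?G X Y i j + ?G Y X i j)
      + cos \<phi> *\<^sub>R (?G X Z i j + ?G Z X i j) + sin \<phi> *\<^sub>R (?G Y Z i j + ?G Z Y i j) = ?I i j)"
    using assms by (auto simp del: index_mult_mat(1) simp: mat_eq_iff index_adj_mult_self_lincomb)
  also have "\<dots> \<longleftrightarrow> (\<forall>i<m. \<forall>j<m. ?G X X i j = ?G Y Y i j \<and> ?G Y Y i j = ?I i j - ?G Z Z i j
      \<and> ?G X Y i j + ?G Y X i j = 0 \<and> ?G X Z i j + ?G Z X i j = 0 \<and> ?G Y Z i j + ?G Z Y i j = 0)"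
    by (simp only: trig_quadratic_eq_const_iff)
  also have "\<dots> \<longleftrightarrow> (adj X * X = adj Y * Y \<and> adj Y * Y = 1\<^sub>m m - adj Z * Z \<and>
         mat_Re (adj X * Y) = 0\<^sub>m m m \<and> mat_Re (adj X * Z) = 0\<^sub>m m m \<and> mat_Re (adj Y * Z) = 0\<^sub>m m m)"
    unfolding entrywise mat_Re_adj_mult_eq_0_iff[OF assms(1,2)]
      mat_Re_adj_mult_eq_0_iff[OF assms(1,3)] mat_Re_adj_mult_eq_0_iff[OF assms(2,3)]
    by (simp only: all_conj_distrib imp_conjR)
  finally show ?thesis .
qed
end
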